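(* Let $\lambda,\mu$ be partitions, $n$ a positive integer, and let $M$ be a multiline queue of shape $\mu$ on $n$ columns whose $j$-th column contains exactly $\lambda'_j$ balls for each $j$. Then $\rho_N(M)=M(\lambda')$ if and only if the row word $\mathrm{rw}(M)$ is a lattice word.
   Context: For a partition $\nu$ with conjugate $\nu'$, a multiline queue of shape $\nu$ on $n$ columns is a tuple $(B_1,\dots,B_{\nu_1})$ of subsets of $[n]$ with $|B_j|=\nu'_j$, drawn with rows bottom to top, columns $1..n$ left to right, ball in $(r,j)$ iff $j\in B_r$; tuples with empty top rows are identified with the tuple obtained by deleting those rows. $M(\nu)=(M_1,\dots,M_{\nu_1})$ with $M_j=\{1,\dots,\nu'_j\}$ is the left-justified multiline queue of shape $\nu$. The row word $\mathrm{rw}(M)$ scans rows bottom to top, each row left to right, recording column numbers of balls; the column word $\mathrm{cw}(M)$ scans columns left to right, each top to bottom, recording row numbers. A word is a lattice word if every initial segment contains at least as many letters $i$ as letters $i+1$ for every $i\ge1$. Collapsing: $\mathrm{Par}_i(w)$ writes "(" for each letter $i+1$ and ")" for each letter $i$ of $w$, left to right, and iteratively matches a "(" with a ")" to its right when adjacent or separated only by matched parentheses. $e_i^\star(B)$ moves every ball of row $i+1$ whose letter in $\mathrm{cw}(B)$ is unmatched in $\mathrm{Par}_i(\mathrm{cw}(B))$ down to row $i$ in the same column. With $L$ the number of rows, $e^\star_{[a,b]}=e^\star_ae^\star_{a+1}\cdots e^\star_b$ (acting right to left) and $\rho_N(B)=e^\star_{[1,L-1]}\cdots e^\star_{[1,1]}(B)$.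 *)

theory Defs
  imports Main
begin

definition is_partition :: "nat list \<Rightarrow> bool" where
  "is_partition \<nu> \<longleftrightarrow> sorted_wrt (\<ge>) \<nu> \<and> 0 \<notin> set \<nu>"

definition part :: "nat list \<Rightarrow> nat \<Rightarrow> nat" where
  "part \<nu> i = (if 1 \<le> i \<and> i \<le> length \<nu> then \<nu> ! (i - 1) else 0)"

text \<open>Conjugate partition, 1-indexed: conjugate nu j = number of parts \<ge> j (meaningful for j \<ge> 1).\<close>
definition conjugate :: "nat list \<Rightarrow> nat \<Rightarrow> nat" where
  "conjugate \<nu> j = length (filter (\<lambda>x. j \<le> x) \<nu>)"

definition conj_part :: "nat list \<Rightarrow> nat list" where
  "conj_part \<nu> = map (conjugate \<nu>) [1..<part \<nu> 1 + 1]"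

text \<open>A multiline queue is represented as a function from row indices to sets of columns;
  row 0 and all rows above the last one are empty (this realises the identification of
  tuples differing by empty top rows).\<close>
definition is_mlq :: "nat list \<Rightarrow> nat \<Rightarrow> (nat \<Rightarrow> nat set) \<Rightarrow> bool" where
  "is_mlq \<mu> n B \<longleftrightarrow> B 0 = {} \<and> (\<forall>r. B r \<subseteq> {1..n}) \<and> (\<forall>r\<ge>1. card (B r) = conjugate \<mu> r)"

definition left_justified :: "nat list \<Rightarrow> (nat \<Rightarrow> nat set)" where
  "left_justified \<nu> = (\<lambda>r. if r = 0 then {} else {1..conjugate \<nu> r})"

definition rw :: "nat \<Rightarrow> (nat \<Rightarrow> nat set) \<Rightarrow> nat list" where
  "rw L B = concat (map (\<lambda>r. sorted_list_of_set (B r)) [1..<L + 1])"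

definition cw_pos :: "nat \<Rightarrow> nat \<Rightarrow> (nat \<Rightarrow> nat set) \<Rightarrow> (nat \<times> nat) list" where
  "cw_pos n L B = concat (map (\<lambda>j. map (\<lambda>r. (r, j)) (filter (\<lambda>r. j \<in> B r) (rev [1..<L + 1])))
                               [1..<n + 1])"

definition cw :: "nat \<Rightarrow> nat \<Rightarrow> (nat \<Rightarrow> nat set) \<Rightarrow> nat list" where
  "cw n L B = map fst (cw_pos n L B)"

definition lattice_word :: "nat list \<Rightarrow> bool" where
  "lattice_word w \<longleftrightarrow>
     (\<forall>m \<le> length w. \<forall>i \<ge> 1. count_list (take m w) (Suc i) \<le> count_list (take m w) i)"

text \<open>matched i w p q: position p (a letter i+1, i.e. an opening parenthesis) is matched
  with position q (a letter i, closing parenthesis) to its right, all parenthesis letters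
  strictly between them being matched among themselves (iterative matching of adjacent
  pairs; letters other than i, i+1 are ignored). Positions are 0-based.\<close>
inductive matched :: "nat \<Rightarrow> nat list \<Rightarrow> nat \<Rightarrow> nat \<Rightarrow> bool" for i w where
  "\<lbrakk> p < q; q < length w; w ! p = Suc i; w ! q = i;
     \<forall>k. p < k \<and> k < q \<and> w ! k \<in> {i, Suc i} \<longrightarrow>
         (\<exists>a b. p < a \<and> b < q \<and> matched i w a b \<and> (k = a \<or> k = b)) \<rbrakk>
   \<Longrightarrow> matched i w p q"

definition unmatched_cols :: "nat \<Rightarrow> nat \<Rightarrow> nat \<Rightarrow> (nat \<Rightarrow> nat set) \<Rightarrow> nat set" where
  "unmatched_cols i n L B =
     {snd (cw_pos n L B ! p) | p. p < length (cw_pos n L B) \<and> fst (cw_pos n L B ! p) = Suc i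
        \<and> \<not> (\<exists>q. matched i (cw n L B) p q)}"

definition estar :: "nat \<Rightarrow> nat \<Rightarrow> nat \<Rightarrow> (nat \<Rightarrow> nat set) \<Rightarrow> (nat \<Rightarrow> nat set)" where
  "estar i n L B = (let U = unmatched_cols i n L B in
      B(i := B i \<union> U, Suc i := B (Suc i) - U))"

text \<open>e*_[a,b] = e*_a e*_(a+1) ... e*_b, acting right to left.\<close>
definition estar_int :: "nat \<Rightarrow> nat \<Rightarrow> nat \<Rightarrow> nat \<Rightarrow> (nat \<Rightarrow> nat set) \<Rightarrow> (nat \<Rightarrow> nat set)" where
  "estar_int n L a b B = foldr (\<lambda>i. estar i n L) [a..<b + 1] B"

definition rhoN :: "nat \<Rightarrow> nat \<Rightarrow> (nat \<Rightarrow> nat set) \<Rightarrow> (nat \<Rightarrow> nat set)" where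
  "rhoN n L B = fold (\<lambda>k. estar_int n L 1 k) [1..<L] B"

end

theory Submission
  imports Defs
begin

text \<open>The lattice property of the row word can be read off row by row: \<open>rw M\<close> is a lattice word
  iff for every \<open>s\<close> the first \<open>s\<close> rows contain at least as many balls in column \<open>c\<close> as in
  column \<open>c+1\<close>, because within a row the letters increase.

  The operator \<open>e*_i\<close> only moves balls of row \<open>i+1\<close> down into row \<open>i\<close>, so it changes these
  counts only at level \<open>i\<close>; a violation created there would need a ball in column \<open>c\<close> of
  row \<open>i+1\<close> bracketed with a ball in column \<open>c+1\<close> of row \<open>i\<close>. Hence every \<open>e*_i\<close> reflects the
  lattice property, and since \<open>M(\<lambda>')\<close> is lattice, \<open>\<rho>\<^sub>N(M) = M(\<lambda>')\<close> forces \<open>rw M\<close> to be lattice.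

  Conversely, if \<open>rw M\<close> is lattice, column heights decrease from left to right after any number
  of rows. Then \<open>e*_[1,k]\<close> lets the balls of row \<open>k+1\<close> fall onto the columns stacked from rows
  \<open>1..k\<close>: the balls still falling are always the rightmost ones and so are never bracketed.
  Thus \<open>\<rho>\<^sub>N(M)\<close> stacks column \<open>j\<close> to its height \<open>\<lambda>'\<^sub>j\<close>, which is \<open>M(\<lambda>')\<close>.\<close>

definition cw_before :: "nat \<times> nat \<Rightarrow> nat \<times> nat \<Rightarrow> bool" where
  "cw_before a b \<longleftrightarrow> snd a < snd b \<or> (snd a = snd b \<and> fst b < fst a)"

lemma set_cw_pos: "set (cw_pos n L B) = {(r, j). j \<in> {1..n} \<and> r \<in> {1..L} \<and> j \<in> B r}"
  by (auto simp: cw_pos_def image_iff simp del: upt_Suc)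

lemma sorted_wrt_concat_map:
  assumes "sorted_wrt Q xs" "\<And>x. x \<in> set xs \<Longrightarrow> sorted_wrt R (f x)"
    and "\<And>x y a b. Q x y \<Longrightarrow> a \<in> set (f x) \<Longrightarrow> b \<in> set (f y) \<Longrightarrow> R a b"
  shows "sorted_wrt R (concat (map f xs))"
  using assms by (induction xs) (auto simp: sorted_wrt_append)

lemma sorted_wrt_cw_pos: "sorted_wrt cw_before (cw_pos n L B)"
  unfolding cw_pos_def
  by (rule sorted_wrt_concat_map[where Q = "(<)"])
     (auto simp: sorted_wrt_map sorted_wrt_rev cw_before_def sorted_wrt_upt
       simp del: upt_Suc intro!: sorted_wrt_filter)

lemma cw_pos_less_iff:
  assumes "p < length (cw_pos n L B)" "q < length (cw_pos n L B)"
  shows "p < q \<longleftrightarrow> cw_before (cw_pos n L B ! p) (cw_pos n L B ! q)"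
proof -
  have "cw_before (cw_pos n L B ! x) (cw_pos n L B ! y)" if "x < y" "y < length (cw_pos n L B)" for x y
    using sorted_wrt_cw_pos that by (auto simp: sorted_wrt_iff_nth_less)
  note ordered = this
  show ?thesis
  proof (cases p q rule: linorder_cases)
    case greater
    then have "cw_before (cw_pos n L B ! q) (cw_pos n L B ! p)" using ordered assms(1) by blast
    then show ?thesis using greater by (auto simp: cw_before_def)
  qed (use ordered assms in \<open>auto simp: cw_before_def\<close>)
qed

lemma length_cw [simp]: "length (cw n L B) = length (cw_pos n L B)"
  by (simp add: cw_def)

lemma nth_cw [simp]: "p < length (cw_pos n L B) \<Longrightarrow> cw n L B ! p = fst (cw_pos n L B ! p)"
  by (simp add: cw_def)

lemma unmatched_cols_iff:
  "j \<in> unmatched_cols i n L B \<longleftrightarrow>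
     (\<exists>p < length (cw_pos n L B). cw_pos n L B ! p = (Suc i, j) \<and> \<not> (\<exists>q. matched i (cw n L B) p q))"
  unfolding unmatched_cols_def by (auto simp: prod_eq_iff)

lemma unmatched_cols_mem_cw_pos:
  "j \<in> unmatched_cols i n L B \<Longrightarrow> (Suc i, j) \<in> set (cw_pos n L B)"
  unfolding unmatched_cols_iff by (metis nth_mem)

lemma unmatched_cols_subset_row: "unmatched_cols i n L B \<subseteq> B (Suc i)"
  by (auto simp: set_cw_pos dest: unmatched_cols_mem_cw_pos)

lemma matchedD: "matched i w p q \<Longrightarrow> p < q \<and> q < length w \<and> w ! p = Suc i \<and> w ! q = i"
  by (erule matched.cases) auto

lemma matched_adjacentI:
  assumes "p < q" "q < length w" "w ! p = Suc i" "w ! q = i"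
    and "\<And>k. p < k \<Longrightarrow> k < q \<Longrightarrow> w ! k \<notin> {i, Suc i}"
  shows "matched i w p q"
  using assms by (intro matched.intros) auto

lemma matched_cw_adjacent:
  assumes p: "p < length (cw_pos n L B)" "cw_pos n L B ! p = (Suc i, c)"
    and partner: "(i, c') \<in> set (cw_pos n L B)" "cw_before (Suc i, c) (i, c')"
    and nothing_between: "\<And>r j. r \<in> {i, Suc i} \<Longrightarrow> j \<in> B r \<Longrightarrow>
        cw_before (Suc i, c) (r, j) \<Longrightarrow> cw_before (r, j) (i, c') \<Longrightarrow> False"
  shows "\<exists>q. matched i (cw n L B) p q"
proof -
  obtain q where q: "q < length (cw_pos n L B)" "cw_pos n L B ! q = (i, c')"
    using partner(1) by (metis in_set_conv_nth)
  have "matched i (cw n L B) p q"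
  proof (rule matched_adjacentI)
    show "p < q" using cw_pos_less_iff[OF p(1) q(1)] p(2) q(2) partner(2) by simp
    fix k assume k: "p < k" "k < q"
    then have kl: "k < length (cw_pos n L B)" using q(1) by simp
    obtain r j where rj: "cw_pos n L B ! k = (r, j)" by fastforce
    have "j \<in> B r" using nth_mem[OF kl] rj by (simp add: set_cw_pos)
    moreover have "cw_before (Suc i, c) (r, j)" "cw_before (r, j) (i, c')"
      using cw_pos_less_iff[OF p(1) kl] cw_pos_less_iff[OF kl q(1)] k p(2) q(2) rj by simp_all
    ultimately show "cw n L B ! k \<notin> {i, Suc i}" using nothing_between kl rj by auto
  qed (use p q in simp_all)
  then show ?thesis by blast
qed

lemma unmatched_cols_subset:
  assumes "0 < i"
  shows "unmatched_cols i n L B \<subseteq> B (Suc i) - B i"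
proof
  fix j assume "j \<in> unmatched_cols i n L B"
  then obtain p where p: "p < length (cw_pos n L B)" "cw_pos n L B ! p = (Suc i, j)"
    and unmatched: "\<not> (\<exists>q. matched i (cw n L B) p q)"
    unfolding unmatched_cols_iff by blast
  have "(Suc i, j) \<in> set (cw_pos n L B)" using p by (metis nth_mem)
  then have j: "j \<in> {1..n}" "Suc i \<le> L" "j \<in> B (Suc i)" by (auto simp: set_cw_pos)
  show "j \<in> B (Suc i) - B i"
  proof (rule ccontr)
    assume "j \<notin> B (Suc i) - B i"
    then have "(i, j) \<in> set (cw_pos n L B)" using j assms by (auto simp: set_cw_pos)
    then have "\<exists>q. matched i (cw n L B) p q"
      by (rule matched_cw_adjacent[OF p]) (auto simp: cw_before_def)
    then show False using unmatched by blast
  qed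
qed

lemma unmatched_colsI:
  assumes "Suc i \<le> L" "j \<in> {1..n}" "j \<in> B (Suc i)" "\<And>j'. j' \<in> B i \<Longrightarrow> j' < j"
  shows "j \<in> unmatched_cols i n L B"
proof -
  have "(Suc i, j) \<in> set (cw_pos n L B)" using assms(1-3) by (simp add: set_cw_pos)
  then obtain p where p: "p < length (cw_pos n L B)" "cw_pos n L B ! p = (Suc i, j)"
    by (metis in_set_conv_nth)
  have "\<not> matched i (cw n L B) p q" for q
  proof
    assume "matched i (cw n L B) p q"
    then have q: "p < q" "q < length (cw_pos n L B)" "fst (cw_pos n L B ! q) = i"
      by (auto dest!: matchedD)
    obtain j' where j': "cw_pos n L B ! q = (i, j')" using q(3) by (metis prod.collapse)
    have "j' \<in> B i" using nth_mem[OF q(2)] j' by (simp add: set_cw_pos)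
    moreover have "cw_before (Suc i, j) (i, j')" using cw_pos_less_iff[OF p(1) q(2)] q(1) p(2) j' by simp
    ultimately show False using assms(4) by (fastforce simp: cw_before_def)
  qed
  then show ?thesis unfolding unmatched_cols_iff using p by blast
qed

lemma not_in_unmatched_cols:
  assumes "0 < i" "Suc c \<le> n" "c \<notin> B i" "Suc c \<in> B i" "Suc c \<notin> B (Suc i)"
  shows "c \<notin> unmatched_cols i n L B"
proof
  assume "c \<in> unmatched_cols i n L B"
  then obtain p where p: "p < length (cw_pos n L B)" "cw_pos n L B ! p = (Suc i, c)"
    and unmatched: "\<not> (\<exists>q. matched i (cw n L B) p q)"
    unfolding unmatched_cols_iff by blast
  have "Suc i \<le> L" using nth_mem[OF p(1)] p(2) by (simp add: set_cw_pos)
  then have "(i, Suc c) \<in> set (cw_pos n L B)" using assms by (auto simp: set_cw_pos)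
  then have "\<exists>q. matched i (cw n L B) p q"
    by (rule matched_cw_adjacent[OF p]) (use assms in \<open>auto simp: cw_before_def\<close>)
  then show False using unmatched by blast
qed

fun col_count :: "(nat \<Rightarrow> nat set) \<Rightarrow> nat \<Rightarrow> nat \<Rightarrow> nat" where
  "col_count B c 0 = 0"
| "col_count B c (Suc s) = col_count B c s + (if c \<in> B (Suc s) then 1 else 0)"

lemma col_count_le: "col_count B c s \<le> s"
  by (induction s) auto

lemma col_count_eq_card: "col_count B c s = card {r \<in> {1..s}. c \<in> B r}"
proof (induction s)
  case (Suc s)
  have "{r \<in> {1..Suc s}. c \<in> B r} = {r \<in> {1..s}. c \<in> B r} \<union> (if c \<in> B (Suc s) then {Suc s} else {})"
    by (auto simp: le_Suc_eq)
  then show ?case using Suc by (simp add: card_insert_if)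
qed simp

lemma col_count_eq_card_column:
  assumes "B 0 = {}" "\<And>r. s < r \<Longrightarrow> B r = {}"
  shows "col_count B c s = card {r. c \<in> B r}"
proof -
  have "r \<in> {1..s}" if "c \<in> B r" for r
  proof (rule ccontr)
    assume "r \<notin> {1..s}"
    then have "r = 0 \<or> s < r" by auto
    then show False using that assms by auto
  qed
  then have "{r. c \<in> B r} = {r \<in> {1..s}. c \<in> B r}" by blast
  then show ?thesis by (simp add: col_count_eq_card)
qed

definition lattice_mlq :: "nat \<Rightarrow> (nat \<Rightarrow> nat set) \<Rightarrow> bool" where
  "lattice_mlq L B \<longleftrightarrow> (\<forall>s\<le>L. \<forall>c\<ge>1. col_count B (Suc c) s \<le> col_count B c s)"

lemma col_count_antimono:
  assumes "lattice_mlq L B" "s \<le> L" "1 \<le> j" "j \<le> j'"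
  shows "col_count B j' s \<le> col_count B j s"
  using assms(4)
proof (induction j' rule: dec_induct)
  case (step m)
  then show ?case using assms(1-3) unfolding lattice_mlq_def by (meson le_trans)
qed simp

lemma lattice_mlq_left_justified: "lattice_mlq L (left_justified \<nu>)"
proof -
  have "col_count (left_justified \<nu>) (Suc c) s \<le> col_count (left_justified \<nu>) c s" if "1 \<le> c" for c s
    using that by (induction s) (auto simp: left_justified_def)
  then show ?thesis unfolding lattice_mlq_def by blast
qed

definition lattice_counts :: "nat list \<Rightarrow> bool" where
  "lattice_counts w \<longleftrightarrow> (\<forall>i\<ge>1. count_list w (Suc i) \<le> count_list w i)"

lemma lattice_word_iff_prefixes: "lattice_word w \<longleftrightarrow> (\<forall>m\<le>length w. lattice_counts (take m w))"
  by (auto simp: lattice_word_def lattice_counts_def)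

lemma lattice_word_append:
  "lattice_word (xs @ ys) \<longleftrightarrow> lattice_word xs \<and> (\<forall>m\<le>length ys. lattice_counts (xs @ take m ys))"
  unfolding lattice_word_iff_prefixes
proof (intro iffI conjI allI impI)
  fix m assume all: "\<forall>m\<le>length (xs @ ys). lattice_counts (take m (xs @ ys))"
  show "lattice_counts (take m xs)" if "m \<le> length xs"
    using all[rule_format, of m] that by simp
  show "lattice_counts (xs @ take m ys)" if "m \<le> length ys"
    using all[rule_format, of "length xs + m"] that by simp
next
  fix m assume "m \<le> length (xs @ ys)"
    and "(\<forall>m\<le>length xs. lattice_counts (take m xs)) \<and> (\<forall>m\<le>length ys. lattice_counts (xs @ take m ys))"
  then show "lattice_counts (take m (xs @ ys))"
    by (cases "m \<le> length xs") auto
qed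

lemma count_list_distinct: "distinct xs \<Longrightarrow> count_list xs x = (if x \<in> set xs then 1 else 0)"
  by (induction xs) auto

lemma sorted_take_closed:
  assumes "sorted ys" "b \<in> set (take m ys)" "a \<in> set ys" "a \<le> b"
  shows "a \<in> set (take m ys)"
proof (rule ccontr)
  assume "a \<notin> set (take m ys)"
  then have "a \<in> set (drop m ys)" using assms(3) by (metis Un_iff append_take_drop_id set_append)
  moreover have "\<forall>x\<in>set (take m ys). \<forall>y\<in>set (drop m ys). x \<le> y"
    using assms(1) sorted_append[of "take m ys" "drop m ys"] by simp
  ultimately have "b \<le> a" using assms(2) by blast
  then show False using assms(2,4) \<open>a \<notin> set (take m ys)\<close> by simp
qed

text \<open>Within a row the letters increase, so a proper prefix of the row can violate the
  lattice condition only if the whole row does.\<close>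
lemma lattice_counts_append_take:
  assumes "sorted ys" "distinct ys" "lattice_counts xs" "lattice_counts (xs @ ys)"
  shows "lattice_counts (xs @ take m ys)"
  unfolding lattice_counts_def
proof (intro allI impI)
  fix i :: nat assume "1 \<le> i"
  have counts: "count_list (take k ys) x = (if x \<in> set (take k ys) then 1 else 0)" for k x
    using assms(2) by (simp add: count_list_distinct)
  show "count_list (xs @ take m ys) (Suc i) \<le> count_list (xs @ take m ys) i"
  proof (cases "Suc i \<in> set (take m ys) \<and> i \<notin> set (take m ys)")
    case True
    then have "i \<notin> set ys" using sorted_take_closed[OF assms(1)] by fastforce
    then have "count_list (xs @ ys) (Suc i) \<le> count_list xs i"
      using assms(4) \<open>1 \<le> i\<close> by (auto simp: lattice_counts_def)
    moreover have "Suc i \<in> set ys" using True by (meson in_set_takeD)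
    ultimately show ?thesis using True counts[of "length ys"] counts[of m] by simp
  next
    case False
    then show ?thesis using assms(3) \<open>1 \<le> i\<close> counts[of m] by (auto simp: lattice_counts_def)
  qed
qed

lemma lattice_word_append_sorted:
  assumes "sorted ys" "distinct ys"
  shows "lattice_word (xs @ ys) \<longleftrightarrow> lattice_word xs \<and> lattice_counts (xs @ ys)"
proof -
  have "lattice_word xs \<Longrightarrow> lattice_counts xs"
    unfolding lattice_word_iff_prefixes by (metis order.refl take_all)
  then show ?thesis
    using lattice_counts_append_take[OF assms] lattice_word_append[of xs ys]
    by (metis order.refl take_all)
qed

lemma count_list_rw: "(\<And>r. finite (B r)) \<Longrightarrow> count_list (rw s B) c = col_count B c s"
  by (induction s) (auto simp: rw_def count_list_distinct)

lemma lattice_word_rw_iff: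
  assumes "\<And>r. finite (B r)"
  shows "lattice_word (rw L B) \<longleftrightarrow> lattice_mlq L B"
proof (induction L)
  case 0
  then show ?case by (simp add: rw_def lattice_mlq_def lattice_word_def)
next
  case (Suc L)
  have rw_Suc: "rw (Suc L) B = rw L B @ sorted_list_of_set (B (Suc L))" by (simp add: rw_def)
  have "lattice_word (rw (Suc L) B) \<longleftrightarrow> lattice_word (rw L B) \<and> lattice_counts (rw (Suc L) B)"
    unfolding rw_Suc using assms by (intro lattice_word_append_sorted) simp_all
  also have "\<dots> \<longleftrightarrow> lattice_mlq L B \<and> (\<forall>c\<ge>1. col_count B (Suc c) (Suc L) \<le> col_count B c (Suc L))"
    using Suc assms by (simp add: lattice_counts_def count_list_rw del: col_count.simps)
  also have "\<dots> \<longleftrightarrow> lattice_mlq (Suc L) B"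
    unfolding lattice_mlq_def by (auto simp: le_Suc_eq simp del: col_count.simps)
  finally show ?case .
qed

lemma estar_eq:
  "estar i n L B = B(i := B i \<union> unmatched_cols i n L B, Suc i := B (Suc i) - unmatched_cols i n L B)"
  by (simp add: estar_def Let_def)

lemma col_count_move_down:
  assumes "0 < i" "U \<subseteq> B (Suc i) - B i"
  shows "col_count (B(i := B i \<union> U, Suc i := B (Suc i) - U)) c s =
           col_count B c s + (if s = i \<and> c \<in> U then 1 else 0)"
  using assms by (induction s) auto

lemma col_count_estar:
  assumes "0 < i"
  shows "col_count (estar i n L B) c s =
           col_count B c s + (if s = i \<and> c \<in> unmatched_cols i n L B then 1 else 0)"
  unfolding estar_eq by (rule col_count_move_down[OF assms unmatched_cols_subset[OF assms]])

lemma estar_subset: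
  assumes "\<And>r. B r \<subseteq> A"
  shows "estar i n L B r \<subseteq> A"
  using assms unmatched_cols_subset_row[of i n L B] unfolding estar_eq by auto

lemma foldr_estar_subset:
  assumes "\<And>r. B r \<subseteq> A"
  shows "foldr (\<lambda>i. estar i n L) is B r \<subseteq> A"
proof (induction "is" arbitrary: r)
  case (Cons i "is")
  show ?case using estar_subset[OF Cons.IH] by simp
qed (simp add: assms)

text \<open>A violation created by \<open>e*_i\<close> sits at level \<open>i\<close> in columns \<open>c, c+1\<close>, the ball of
  row \<open>i+1\<close> at \<open>c\<close> having moved down. The lattice condition at levels \<open>i-1\<close> and \<open>i+1\<close> then
  forces a ball at \<open>c+1\<close> in row \<open>i\<close> but not in row \<open>i+1\<close>, and it brackets the one at \<open>c\<close>.\<close>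
lemma lattice_mlq_estar_reflect:
  assumes i: "0 < i" "Suc i \<le> L" and cols: "\<And>r. B r \<subseteq> {1..n}"
    and lattice: "lattice_mlq L (estar i n L B)"
  shows "lattice_mlq L B"
proof (rule ccontr)
  let ?U = "unmatched_cols i n L B"
  assume "\<not> lattice_mlq L B"
  then obtain s c where s: "s \<le> L" "1 \<le> c" "col_count B c s < col_count B (Suc c) s"
    unfolding lattice_mlq_def by (auto simp: not_le)
  have after: "col_count (estar i n L B) (Suc c) s' \<le> col_count (estar i n L B) c s'" if "s' \<le> L" for s'
    using lattice that s(2) unfolding lattice_mlq_def by blast
  have "s = i" using after[OF s(1)] s(3) by (auto simp: col_count_estar[OF i(1)] split: if_splits)
  then have c_moved: "c \<in> ?U" and step: "col_count B (Suc c) i = Suc (col_count B c i)"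
    using after[OF s(1)] s(3) by (auto simp: col_count_estar[OF i(1)] split: if_splits)
  then have c: "c \<in> B (Suc i)" "c \<notin> B i" using unmatched_cols_subset[OF i(1)] by auto
  have "col_count B (Suc c) (Suc i) \<le> col_count B c (Suc i)"
    using after[OF i(2)] by (simp add: col_count_estar[OF i(1)] del: col_count.simps)
  then have c1_above: "Suc c \<notin> B (Suc i)" using step c by auto
  obtain i' where i': "i = Suc i'" using i(1) gr0_conv_Suc by blast
  have "i' \<le> L" "i' \<noteq> i" using i i' by auto
  then have "col_count B (Suc c) i' \<le> col_count B c i'"
    using after[of i'] by (simp add: col_count_estar[OF i(1)] del: col_count.simps)
  then have c1: "Suc c \<in> B i" using step c i' by (auto split: if_splits)
  then have "Suc c \<le> n" using cols by (meson atLeastAtMost_iff subsetD)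
  then have "c \<notin> ?U" using not_in_unmatched_cols[OF i(1) _ c(2) c1 c1_above] by blast
  then show False using c_moved by contradiction
qed

lemma lattice_mlq_foldr_estar_reflect:
  assumes "\<And>i. i \<in> set is \<Longrightarrow> 0 < i \<and> Suc i \<le> L" "\<And>r. B r \<subseteq> {1..n}"
    and "lattice_mlq L (foldr (\<lambda>i. estar i n L) is B)"
  shows "lattice_mlq L B"
  using assms(1,3)
proof (induction "is")
  case (Cons i "is")
  then show ?case
    using lattice_mlq_estar_reflect[of i L "foldr (\<lambda>i. estar i n L) is B" n]
      foldr_estar_subset[OF assms(2)] by simp
qed simp

lemma lattice_mlq_rhoN_reflect:
  assumes "\<And>r. B r \<subseteq> {1..n}" "lattice_mlq L (rhoN n L B)"
  shows "lattice_mlq L B"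
proof -
  have "lattice_mlq L B"
    if "\<And>k. k \<in> set ks \<Longrightarrow> k < L" "\<And>r. B r \<subseteq> {1..n}"
      and "lattice_mlq L (fold (\<lambda>k. estar_int n L 1 k) ks B)" for ks B
    using that
  proof (induction ks arbitrary: B)
    case (Cons k ks)
    have "\<And>r. estar_int n L 1 k B r \<subseteq> {1..n}"
      unfolding estar_int_def using Cons.prems(2) by (rule foldr_estar_subset)
    then have "lattice_mlq L (estar_int n L 1 k B)" using Cons by simp
    moreover have "k < L" using Cons.prems(1) by simp
    ultimately show ?case
      unfolding estar_int_def using Cons.prems(2)
      by (intro lattice_mlq_foldr_estar_reflect[of "[1..<k + 1]" L B n]) auto
  qed simp
  from this[of "[1..<L]"] show ?thesis using assms unfolding rhoN_def by simp
qed

definition stacked :: "(nat \<Rightarrow> nat set) \<Rightarrow> nat \<Rightarrow> (nat \<Rightarrow> nat set) \<Rightarrow> bool" where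
  "stacked M k B \<longleftrightarrow> B 0 = {} \<and> (\<forall>r\<in>{1..k}. B r = {j. r \<le> col_count M j k}) \<and> (\<forall>r>k. B r = M r)"

text \<open>The state reached when \<open>e*_k, \<dots>, e*_(i+1)\<close> have acted on a queue whose first \<open>k\<close>
  rows are stacked: the ball of row \<open>k+1\<close> in column \<open>j\<close> has fallen to row \<open>max (h+1) (i+1)\<close>,
  where \<open>h\<close> is the height of column \<open>j\<close> in the first \<open>k\<close> rows.\<close>
definition partly_dropped :: "(nat \<Rightarrow> nat set) \<Rightarrow> nat \<Rightarrow> nat \<Rightarrow> (nat \<Rightarrow> nat set) \<Rightarrow> bool" where
  "partly_dropped M k i B \<longleftrightarrow> B 0 = {} \<and>
     (\<forall>r\<in>{1..Suc k}. B r = {j. r \<le> col_count M j k} \<union>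
                            {j \<in> M (Suc k). r = max (Suc (col_count M j k)) (Suc i)}) \<and>
     (\<forall>r>Suc k. B r = M r)"

lemma stacked_imp_partly_dropped:
  assumes "stacked M k B"
  shows "partly_dropped M k k B"
proof -
  have "B r = {j. r \<le> col_count M j k} \<union> {j \<in> M (Suc k). r = max (Suc (col_count M j k)) (Suc k)}"
    if "r \<in> {1..Suc k}" for r
  proof (cases "r = Suc k")
    case True
    then show ?thesis
      using assms unfolding stacked_def by (auto simp: max_def dest: order_trans[OF _ col_count_le])
  next
    case False
    then show ?thesis using assms that col_count_le[of M _ k] unfolding stacked_def by auto
  qed
  then show ?thesis using assms unfolding stacked_def partly_dropped_def by auto
qed

lemma partly_dropped_imp_stacked:
  assumes "partly_dropped M k 0 B"
  shows "stacked M (Suc k) B"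
  using assms unfolding partly_dropped_def stacked_def by (auto simp: max_def)

lemma partly_dropped_rows:
  assumes "Suc i \<le> k" "partly_dropped M k (Suc i) B"
  shows "B (Suc i) = {j. Suc i \<le> col_count M j k}"
    and "B (Suc (Suc i)) = {j. Suc (Suc i) \<le> col_count M j k} \<union> {j \<in> M (Suc k). col_count M j k \<le> Suc i}"
  using assms unfolding partly_dropped_def by (auto simp: max_def)

text \<open>Because column heights decrease from left to right, the balls of row \<open>i+2\<close> that still have
  to fall are exactly the rightmost ones, so none of them is bracketed.\<close>
lemma unmatched_cols_partly_dropped:
  assumes i: "Suc i \<le> k" and k: "Suc k \<le> L" and cols: "\<And>r. M r \<subseteq> {1..n}"
    and antimono: "\<And>j j'. 1 \<le> j \<Longrightarrow> j \<le> j' \<Longrightarrow> col_count M j' k \<le> col_count M j k"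
    and B: "partly_dropped M k (Suc i) B"
  shows "unmatched_cols (Suc i) n L B = {j \<in> M (Suc k). col_count M j k \<le> i}"
proof
  note rows = partly_dropped_rows[OF i B]
  show "unmatched_cols (Suc i) n L B \<subseteq> {j \<in> M (Suc k). col_count M j k \<le> i}"
    using unmatched_cols_subset[of "Suc i" n L B] unfolding rows by auto
  show "{j \<in> M (Suc k). col_count M j k \<le> i} \<subseteq> unmatched_cols (Suc i) n L B"
  proof
    fix j assume j: "j \<in> {j \<in> M (Suc k). col_count M j k \<le> i}"
    then have "j \<in> {1..n}" using cols by blast
    moreover have "j' < j" if "j' \<in> B (Suc i)" for j'
      using that j antimono[of j j'] \<open>j \<in> {1..n}\<close> unfolding rows by (cases "j' < j") auto
    ultimately show "j \<in> unmatched_cols (Suc i) n L B"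
      using unmatched_colsI[of "Suc i" L j n B] i k j unfolding rows by auto
  qed
qed

lemma partly_dropped_estar:
  assumes i: "Suc i \<le> k" and k: "Suc k \<le> L" and cols: "\<And>r. M r \<subseteq> {1..n}"
    and antimono: "\<And>j j'. 1 \<le> j \<Longrightarrow> j \<le> j' \<Longrightarrow> col_count M j' k \<le> col_count M j k"
    and B: "partly_dropped M k (Suc i) B"
  shows "partly_dropped M k i (estar (Suc i) n L B)"
proof -
  let ?h = "\<lambda>j. col_count M j k" and ?S = "M (Suc k)"
  note rows = partly_dropped_rows[OF i B]
  note U = unmatched_cols_partly_dropped[OF i k cols antimono B]
  have unchanged: "estar (Suc i) n L B r = B r" if "r \<notin> {Suc i, Suc (Suc i)}" for r
    using that by (simp add: estar_eq)
  have "estar (Suc i) n L B r =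
        {j. r \<le> ?h j} \<union> {j \<in> ?S. r = max (Suc (?h j)) (Suc i)}" if "r \<in> {1..Suc k}" for r
  proof -
    consider "r = Suc i" | "r = Suc (Suc i)" | "r \<noteq> Suc i" "r \<noteq> Suc (Suc i)" by blast
    then show ?thesis
    proof cases
      case 3
      then have "B r = {j. r \<le> ?h j} \<union> {j \<in> ?S. r = max (Suc (?h j)) (Suc (Suc i))}"
        using B that unfolding partly_dropped_def by blast
      then show ?thesis using 3 unchanged[of r] by (auto simp: max_def)
    qed (auto simp: estar_eq rows U max_def)
  qed
  moreover have "estar (Suc i) n L B r = M r" if "Suc k < r" for r
    using B that i unchanged[of r] unfolding partly_dropped_def by auto
  moreover have "estar (Suc i) n L B 0 = {}" using B unchanged[of 0] unfolding partly_dropped_def by auto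
  ultimately show ?thesis unfolding partly_dropped_def by blast
qed

lemma stacked_estar_int:
  assumes k: "Suc k \<le> L" and cols: "\<And>r. M r \<subseteq> {1..n}"
    and antimono: "\<And>j j'. 1 \<le> j \<Longrightarrow> j \<le> j' \<Longrightarrow> col_count M j' k \<le> col_count M j k"
    and B: "stacked M k B"
  shows "stacked M (Suc k) (estar_int n L 1 k B)"
proof -
  have "partly_dropped M k i (foldr (\<lambda>i. estar i n L) [Suc i..<Suc k] B)" if "i \<le> k" for i
    using that
  proof (induction i rule: inc_induct)
    case base
    then show ?case using stacked_imp_partly_dropped[OF B] by simp
  next
    case (step i)
    then have "[Suc i..<Suc k] = Suc i # [Suc (Suc i)..<Suc k]" by (simp add: upt_conv_Cons)
    then show ?case using partly_dropped_estar[OF _ k cols antimono step.IH] step.hyps by simp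
  qed
  from this[of 0] show ?thesis unfolding estar_int_def by (simp add: partly_dropped_imp_stacked)
qed

lemma stacked_rhoN:
  assumes cols: "\<And>r. M r \<subseteq> {1..n}" and "M 0 = {}" and lattice: "lattice_mlq L M"
  shows "stacked M L (rhoN n L M)"
proof -
  have "stacked M L (fold (\<lambda>k. estar_int n L 1 k) [k..<L] B)" if "k \<le> L" "stacked M k B" for k B
    using that
  proof (induction k arbitrary: B rule: inc_induct)
    case (step k)
    have "stacked M (Suc k) (estar_int n L 1 k B)"
      using step col_count_antimono[OF lattice, of k] by (intro stacked_estar_int[OF _ cols]) auto
    then show ?case using step by (simp add: upt_conv_Cons)
  qed simp
  moreover have "stacked M 0 M" "stacked M 1 M" using assms(2) by (auto simp: stacked_def)
  ultimately show ?thesis unfolding rhoN_def by (cases L) auto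
qed

lemma conjugate_antimono: "j' \<le> j \<Longrightarrow> conjugate \<nu> j \<le> conjugate \<nu> j'"
  unfolding conjugate_def by (induction \<nu>) auto

lemma conjugate_eq_0:
  assumes "is_partition \<nu>" "part \<nu> 1 < j"
  shows "conjugate \<nu> j = 0"
proof (cases \<nu>)
  case (Cons a rest)
  then have "\<forall>x\<in>set rest. x \<le> a" "a < j" using assms by (auto simp: is_partition_def part_def)
  then show ?thesis using Cons by (auto simp: conjugate_def filter_empty_conv)
qed (simp add: conjugate_def)

lemma downward_closed_eq_atLeastAtMost_card:
  assumes "finite A" "0 \<notin> A" "\<And>j j'. j \<in> A \<Longrightarrow> 0 < j' \<Longrightarrow> j' \<le> j \<Longrightarrow> j' \<in> A"
  shows "A = {1..card A}"
proof (cases "A = {}")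
  case False
  have "Max A \<in> A" using Max_in[OF assms(1) False] .
  have "A \<subseteq> {1..Max A}"
  proof
    fix j assume "j \<in> A"
    then show "j \<in> {1..Max A}" using assms(2) Max_ge[OF assms(1)] by (cases j) auto
  qed
  moreover have "{1..Max A} \<subseteq> A" using assms(3)[OF \<open>Max A \<in> A\<close>] by auto
  ultimately have "A = {1..Max A}" by blast
  then obtain m where "A = {1..m}" by blast
  then show ?thesis by simp
qed simp

lemma left_justified_conj_part:
  assumes "is_partition lam" "0 < r"
  shows "left_justified (conj_part lam) r = {j. 0 < j \<and> r \<le> conjugate lam j}"
proof -
  let ?A = "{j. 0 < j \<and> r \<le> conjugate lam j}"
  have bound: "j \<le> part lam 1" if "j \<in> ?A" for j
    using that assms(2) conjugate_eq_0[OF assms(1), of j] by (cases "j \<le> part lam 1") auto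
  have A: "?A = {j. r \<le> conjugate lam j} \<inter> set [1..<part lam 1 + 1]"
  proof (intro set_eqI iffI)
    fix j assume "j \<in> ?A"
    then show "j \<in> {j. r \<le> conjugate lam j} \<inter> set [1..<part lam 1 + 1]" using bound[of j] by auto
  qed auto
  have "conjugate (conj_part lam) r = length (filter (\<lambda>j. r \<le> conjugate lam j) [1..<part lam 1 + 1])"
    by (simp add: conjugate_def conj_part_def filter_map o_def)
  also have "\<dots> = card ?A" unfolding A by (rule distinct_length_filter) simp
  finally have "conjugate (conj_part lam) r = card ?A" .
  moreover have "?A = {1..card ?A}"
  proof (rule downward_closed_eq_atLeastAtMost_card)
    show "finite ?A" unfolding A by simp
    show "j' \<in> ?A" if "j \<in> ?A" "0 < j'" "j' \<le> j" for j j'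
      using that conjugate_antimono[of j' j lam] by simp
  qed simp
  ultimately show ?thesis using assms(2) by (simp add: left_justified_def)
qed

lemma stacked_eq_left_justified:
  assumes "is_partition lam" "stacked M L B" "\<And>r. M r \<subseteq> {1..n}" "\<And>r. L < r \<Longrightarrow> M r = {}"
    and heights: "\<And>j. 0 < j \<Longrightarrow> col_count M j L = conjugate lam j"
  shows "B = left_justified (conj_part lam)"
proof
  fix r
  show "B r = left_justified (conj_part lam) r"
  proof (cases "r = 0")
    case False
    have "0 \<notin> M r'" for r' using assms(3)[of r'] by auto
    then have "col_count M 0 L = 0" by (induction L) simp_all
    then have "r \<le> col_count M j L \<Longrightarrow> 0 < j" for j using False by (cases j) auto
    then have stack: "{j. r \<le> col_count M j L} = {j. 0 < j \<and> r \<le> col_count M j L}" by blast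
    have "B r = {j. 0 < j \<and> r \<le> col_count M j L}"
    proof (cases "r \<le> L")
      case True
      then show ?thesis using assms(2) False stack unfolding stacked_def by simp
    next
      case False
      then have "r \<le> col_count M j L \<longleftrightarrow> False" for j using col_count_le[of M j L] by simp
      then show ?thesis using assms(2,4) False unfolding stacked_def by simp
    qed
    also have "\<dots> = {j. 0 < j \<and> r \<le> conjugate lam j}" using heights by auto
    finally show ?thesis using left_justified_conj_part[OF assms(1)] False by simp
  qed (use assms(2) in \<open>simp add: stacked_def left_justified_def\<close>)
qed

lemma mlq_row_eq_empty:
  assumes "is_partition \<mu>" "is_mlq \<mu> n M" "part \<mu> 1 < r"
  shows "M r = {}"
proof -
  have "card (M r) = 0" using assms conjugate_eq_0[OF assms(1)] by (simp add: is_mlq_def)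
  moreover have "finite (M r)"
    using assms(2) unfolding is_mlq_def by (meson finite_atLeastAtMost finite_subset)
  ultimately show ?thesis by simp
qed

theorem lemma4p23:
  fixes lam mu :: "nat list" and n :: nat and M :: "nat \<Rightarrow> nat set"
  assumes "is_partition lam" and "is_partition mu" and "0 < n"
    and "is_mlq mu n M"
    and "\<forall>j\<ge>1. card {r. j \<in> M r} = conjugate lam j"
  shows "rhoN n (part mu 1) M = left_justified (conj_part lam)
         \<longleftrightarrow> lattice_word (rw (part mu 1) M)"
proof -
  define L where "L = part mu 1"
  have cols: "\<And>r. M r \<subseteq> {1..n}" and "M 0 = {}" using assms(4) by (auto simp: is_mlq_def)
  have top: "M r = {}" if "L < r" for r
    using mlq_row_eq_empty[OF assms(2,4)] that unfolding L_def .
  have heights: "col_count M j L = conjugate lam j" if "0 < j" for j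
    using col_count_eq_card_column[of M L j, OF \<open>M 0 = {}\<close> top] assms(5) that by simp
  have "rhoN n L M = left_justified (conj_part lam) \<longleftrightarrow> lattice_mlq L M"
  proof
    assume "rhoN n L M = left_justified (conj_part lam)"
    then have "lattice_mlq L (rhoN n L M)" using lattice_mlq_left_justified by simp
    then show "lattice_mlq L M" by (rule lattice_mlq_rhoN_reflect[OF cols])
  next
    assume "lattice_mlq L M"
    then have "stacked M L (rhoN n L M)" by (rule stacked_rhoN[of M n, OF cols \<open>M 0 = {}\<close>])
    then show "rhoN n L M = left_justified (conj_part lam)"
      by (rule stacked_eq_left_justified[OF assms(1) _ cols top heights])
  qed
  moreover have "lattice_word (rw L M) \<longleftrightarrow> lattice_mlq L M"
    using cols by (intro lattice_word_rw_iff) (meson finite_atLeastAtMost finite_subset)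
  ultimately show ?thesis by (simp add: L_def)
qed

end
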